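(* Let $g\colon X\to\mathcal Q^{\vartriangle}$ be closed and convex. Then $g^{**}=g$, where for $x\in X$ $$g^{**}(x)=\bigcap_{\xi\in X^{\vartriangle},\,r\in\mathbb R,\,z^*\in C^-}\big(S_{(\xi,r,z^* )}(x)-^{\vartriangle}g^*(\xi,r,z^* )\big)$$ and $g^*\colon X^{\vartriangle}\times\mathbb R\times C^-\to\mathcal Q^{\vartriangle}$ is $g^*(\xi,r,z^* )=\bigcap_{x\in X}\big(S_{(\xi,r,z^* )}(x)-^{\vartriangle}g(x)\big)$.
   Context: $X,Z$ are separated locally convex spaces with duals $X^*,Z^*$; $C\subseteq Z$ convex cone with $0\in C$, $C^-=\{z^*\in Z^*: z^*(z)\leq0\ \forall z\in C\}$, assumed $\neq\{0\}$. $\mathcal Q^{\vartriangle}=\{A\subseteq Z: A=\operatorname{cl}\operatorname{co}(A+C)\}$ (contains $\emptyset$). $g$ is convex (closed) iff $\operatorname{gr}g=\{(x,z): z\in g(x)\}$ is convex (closed) in $X\times Z$. For $A,B\subseteq Z$: $A-^{\vartriangle}B=\{z\in Z: B+\{z\}\subseteq A\}$. For $x^*\in X^*$, $r\in\mathbb R$: $x^*_r(x)=x^*(x)-r$, $\hat x^*_r(x)=-\infty$ if $x^*(x)\leq r$, $+\infty$ otherwise; $\hat x^*=\hat x^*_0$; $X^{\vartriangle}=X^*\cup\{\hat x^*: x^*\in X^*\}$; $\xi_r=x^*_r$ if $\xi=x^*$, $\xi_r=\hat x^*_r$ if $\xi=\hat x^*$. Conaffine functions: $S_{(\xi,r,z^*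 )}(x)=\{z\in Z: \xi_r(x)\leq -z^*(z)\}$ for $\xi\in X^{\vartriangle}$, $r\in\mathbb R$, $z^*\in C^-$ (order of $\overline{\mathbb R}=\mathbb R\cup\{\pm\infty\}$). *)

theory Defs
  imports "HOL-Analysis.Analysis"
begin

class lc_tvs = real_vector + t2_space +
  assumes lc_continuous_add:
    "open U \<Longrightarrow> a + b \<in> U \<Longrightarrow>
      \<exists>V W. open V \<and> open W \<and> a \<in> V \<and> b \<in> W \<and> (\<forall>v\<in>V. \<forall>w\<in>W. v + w \<in> U)"
  assumes lc_continuous_scaleR:
    "open U \<Longrightarrow> c *\<^sub>R a \<in> U \<Longrightarrow>
      \<exists>e>0. \<exists>V. open V \<and> a \<in> V \<and> (\<forall>d. \<bar>d - c\<bar> < e \<longrightarrow> (\<forall>v\<in>V. d *\<^sub>R v \<in> U))"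
  assumes lc_locally_convex:
    "open U \<Longrightarrow> (0::'a) \<in> U \<Longrightarrow> \<exists>V. open V \<and> 0 \<in> V \<and> V \<subseteq> U \<and>
       (\<forall>x\<in>V. \<forall>y\<in>V. \<forall>u::real. 0 \<le> u \<and> u \<le> 1 \<longrightarrow> (1 - u) *\<^sub>R x + u *\<^sub>R y \<in> V)"

definition topdual :: "('a::lc_tvs \<Rightarrow> real) set" where
  "topdual = {f. linear f \<and> continuous_on UNIV f}"

definition negdual :: "'z::lc_tvs set \<Rightarrow> ('z \<Rightarrow> real) set" where
  "negdual C = {zs \<in> topdual. \<forall>z\<in>C. zs z \<le> 0}"

definition Qtri :: "'z::lc_tvs set \<Rightarrow> 'z set set" where
  "Qtri C = {A. A = closure (convex hull {a + c | a c. a \<in> A \<and> c \<in> C})}"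

definition graph :: "('x \<Rightarrow> 'z set) \<Rightarrow> ('x \<times> 'z) set" where
  "graph g = {(x, z). z \<in> g x}"

definition minus_tri :: "'z::real_vector set \<Rightarrow> 'z set \<Rightarrow> 'z set" where
  "minus_tri A B = {z. \<forall>b\<in>B. b + z \<in> A}"

text \<open>Elements of X^triangle: either x^* or hat x^*.\<close>
datatype 'x xtri = Lin "'x \<Rightarrow> real" | Hat "'x \<Rightarrow> real"

definition Xtri :: "('x::lc_tvs) xtri set" where
  "Xtri = {Lin f | f. f \<in> topdual} \<union> {Hat f | f. f \<in> topdual}"

fun xi_r :: "'x xtri \<Rightarrow> real \<Rightarrow> 'x \<Rightarrow> ereal" where
  "xi_r (Lin f) r x = ereal (f x - r)"
| "xi_r (Hat f) r x = (if f x \<le> r then -\<infinity> else \<infinity>)"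

definition Scon :: "'x xtri \<Rightarrow> real \<Rightarrow> ('z::real_vector \<Rightarrow> real) \<Rightarrow> 'x \<Rightarrow> 'z set" where
  "Scon xi r zs x = {z. xi_r xi r x \<le> ereal (- zs z)}"

definition conj :: "('x::lc_tvs \<Rightarrow> 'z::lc_tvs set) \<Rightarrow> 'x xtri \<Rightarrow> real \<Rightarrow> ('z \<Rightarrow> real) \<Rightarrow> 'z set" where
  "conj g xi r zs = (\<Inter>x. minus_tri (Scon xi r zs x) (g x))"

definition biconj :: "'z::lc_tvs set \<Rightarrow> ('x::lc_tvs \<Rightarrow> 'z set) \<Rightarrow> 'x \<Rightarrow> 'z set" where
  "biconj C g x = \<Inter>{minus_tri (Scon xi r zs x) (conj g xi r zs) | xi r zs.
                        xi \<in> Xtri \<and> zs \<in> negdual C}"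

end

theory Submission
  imports Defs
begin

(* The inclusion g x <= biconj C g x holds for every g, directly from the definitions.
   For the converse, take z not in g x.  The graph of g is a nonempty closed convex subset
   of the separated locally convex space X x Z (if it is empty, the biconjugate is empty as
   well), so a continuous linear functional F (x, z) = xs x + zs z strictly separates
   (x, z) from it: xs + zs <= alpha on the graph and > alpha at (x, z).  Since the values
   g x are stable under adding elements of the cone C, zs is nonpositive on C, i.e. zs lies
   in the negative dual cone.  Then 0 belongs to the conjugate conj g (Lin xs) alpha zs,
   and z in biconj C g x would force xs x + zs z <= alpha. *)

section \<open>Hahn--Banach extension theorem\<close>

locale sublinear_functional =
  fixes p :: "'a::real_vector \<Rightarrow> real"
  assumes subadditive: "p (x + y) \<le> p x + p y"
    and pos_homogeneous: "c > 0 \<Longrightarrow> p (c *\<^sub>R x) = c * p x"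
begin

lemma at_zero [simp]: "p 0 = 0"
  using pos_homogeneous[of 2 0] by simp

text \<open>The functional t v |-> t p(v) on the line through v is dominated by p; for negative t
  this uses 0 = p 0 \<le> p v + p (-v).\<close>
lemma scaled_le: "c * p x \<le> p (c *\<^sub>R x)"
proof (cases c "0::real" rule: linorder_cases)
  case less
  have "0 \<le> p x + p (- x)"
    using subadditive[of x "- x"] by simp
  then have "c * p x \<le> - c * p (- x)"
    using mult_nonpos_nonneg[of c "p x + p (- x)"] less by (simp add: algebra_simps)
  also have "\<dots> = p (c *\<^sub>R x)"
    using pos_homogeneous[of "- c" "- x"] less by simp
  finally show ?thesis .
qed (simp_all add: pos_homogeneous)

text \<open>Partial linear functionals dominated by p, represented by their graphs: linear
  subspaces of the product with the real line lying below the graph of p.\<close>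
definition dominated :: "('a \<times> real) set \<Rightarrow> bool" where
  "dominated H \<longleftrightarrow> subspace H \<and> (\<forall>(a, b)\<in>H. b \<le> p a)"

lemma dominated_unique:
  assumes "dominated H" "(a, b) \<in> H" "(a, b') \<in> H"
  shows "b = b'"
proof -
  have H: "subspace H" "\<And>a b. (a, b) \<in> H \<Longrightarrow> b \<le> p a"
    using assms(1) unfolding dominated_def by auto
  have "(0, b - b') \<in> H" "(0, b' - b) \<in> H"
    using subspace_diff[OF H(1) assms(2,3)] subspace_diff[OF H(1) assms(3,2)] by simp_all
  then show ?thesis
    using H(2)[of 0 "b - b'"] H(2)[of 0 "b' - b"] by simp
qed

lemma dominated_ray: "dominated (span {(v, p v)})"
  unfolding dominated_def
proof
  show "\<forall>(a, b)\<in>span {(v, p v)}. b \<le> p a"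
  proof clarify
    fix a b assume "(a, b) \<in> span {(v, p v)}"
    then obtain k where "(a, b) = k *\<^sub>R (v, p v)"
      unfolding span_singleton by blast
    then show "b \<le> p a"
      using scaled_le[of k v] by simp
  qed
qed simp

lemma dominated_chain_Union:
  assumes dom: "\<And>H. H \<in> Ch \<Longrightarrow> dominated H" and "chain\<^sub>\<subseteq> Ch" and "Ch \<noteq> {}"
  shows "dominated (\<Union>Ch)"
proof -
  have comparable: "\<And>H K. H \<in> Ch \<Longrightarrow> K \<in> Ch \<Longrightarrow> H \<subseteq> K \<or> K \<subseteq> H"
    using assms(2) unfolding chain_subset_def by auto
  have sub: "subspace H" if "H \<in> Ch" for H
    using dom[OF that] unfolding dominated_def by simp
  have "subspace (\<Union>Ch)"
    unfolding subspace_def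
  proof (intro conjI ballI allI)
    show "0 \<in> \<Union>Ch"
      using assms(3) sub subspace_0 by blast
  next
    fix u v assume "u \<in> \<Union>Ch" "v \<in> \<Union>Ch"
    then obtain H K where "H \<in> Ch" "K \<in> Ch" "u \<in> H" "v \<in> K" by blast
    then show "u + v \<in> \<Union>Ch"
      using comparable[of H K] sub subspace_add by blast
  next
    fix c :: real and u assume "u \<in> \<Union>Ch"
    then show "c *\<^sub>R u \<in> \<Union>Ch"
      using sub subspace_scale by blast
  qed
  then show ?thesis
    using dom unfolding dominated_def by blast
qed

lemma maximal_dominated_exists:
  assumes "dominated H0"
  shows "\<exists>M. dominated M \<and> H0 \<subseteq> M \<and> (\<forall>H. dominated H \<longrightarrow> M \<subseteq> H \<longrightarrow> H = M)"
proof -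
  define A where "A = {H. dominated H \<and> H0 \<subseteq> H}"
  have "\<forall>Ch\<in>chains A. \<exists>U\<in>A. \<forall>H\<in>Ch. H \<subseteq> U"
  proof
    fix Ch assume Ch_chain: "Ch \<in> chains A"
    show "\<exists>U\<in>A. \<forall>H\<in>Ch. H \<subseteq> U"
    proof (cases "Ch = {}")
      case True
      then show ?thesis using assms A_def by blast
    next
      case False
      have Ch: "Ch \<subseteq> A" "chain\<^sub>\<subseteq> Ch"
        using Ch_chain unfolding chains_def by auto
      have "dominated (\<Union>Ch)"
        using dominated_chain_Union[OF _ Ch(2) False] Ch(1) unfolding A_def by blast
      moreover have "H0 \<subseteq> \<Union>Ch"
        using Ch(1) False unfolding A_def by blast
      ultimately show ?thesis unfolding A_def by blast
    qed
  qed
  from Zorn_Lemma2[OF this] obtain M where "M \<in> A" and "\<forall>H\<in>A. M \<subseteq> H \<longrightarrow> H = M"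
    by blast
  then show ?thesis
    unfolding A_def by blast
qed

text \<open>The one-dimensional extension step: a constant c with these two bounds exists, namely
  the supremum of the values b - p (a - y).\<close>
lemma extension_constant_exists:
  assumes M: "dominated M"
  shows "\<exists>c. \<forall>(a, b)\<in>M. b + c \<le> p (a + y) \<and> b - c \<le> p (a - y)"
proof -
  have sub: "subspace M" and dom: "\<And>a b. (a, b) \<in> M \<Longrightarrow> b \<le> p a"
    using M unfolding dominated_def by auto
  define L where "L = {b - p (a - y) | a b. (a, b) \<in> M}"
  have lower_le_upper: "b - p (a - y) \<le> p (a' + y) - b'" if "(a, b) \<in> M" "(a', b') \<in> M" for a b a' b'
  proof -
    have "b + b' \<le> p (a + a')"
      using dom subspace_add[OF sub that] by simp
    also have "\<dots> \<le> p (a - y) + p (a' + y)"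
      using subadditive[of "a - y" "a' + y"] by simp
    finally show ?thesis by simp
  qed
  have M0: "(0, 0) \<in> M"
    using subspace_0[OF sub] by (simp add: zero_prod_def)
  have L_le: "b - p (a - y) \<le> Sup L" if "(a, b) \<in> M" for a b
  proof (rule cSup_upper)
    show "bdd_above L"
      using lower_le_upper[OF _ M0] by (auto simp: L_def bdd_above_def)
  qed (use that L_def in blast)
  have le_L: "Sup L \<le> p (a + y) - b" if "(a, b) \<in> M" for a b
    by (rule cSup_least) (use M0 lower_le_upper[OF _ that] L_def in auto)
  have "b + Sup L \<le> p (a + y) \<and> b - Sup L \<le> p (a - y)" if "(a, b) \<in> M" for a b
    using L_le[OF that] le_L[OF that] by simp
  then show ?thesis
    by auto
qed

text \<open>Adjoining the direction (y, c) keeps the graph dominated: for t \<noteq> 0 the bound at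
  (a + t y, b + t c) is the bound at (a / |t| \<plusminus> y, b / |t| \<plusminus> c), scaled by |t|.\<close>
lemma dominated_sums_span:
  assumes M: "dominated M" and bound: "\<forall>(a, b)\<in>M. b + c \<le> p (a + y) \<and> b - c \<le> p (a - y)"
  shows "dominated {m + w | m w. m \<in> M \<and> w \<in> span {(y, c)}}"
    (is "dominated ?M'")
proof -
  have sub: "subspace M" and dom: "\<And>a b. (a, b) \<in> M \<Longrightarrow> b \<le> p a"
    using M unfolding dominated_def by auto
  have "b' \<le> p a'" if mem: "(a', b') \<in> ?M'" for a' b'
  proof -
    obtain a b t where ab: "(a, b) \<in> M" and a': "a' = a + t *\<^sub>R y" and b': "b' = b + t * c"
      using mem unfolding span_singleton by auto
    show ?thesis
    proof (cases "t = 0")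
      case True
      then show ?thesis using dom ab a' b' by simp
    next
      case False
      define s where "s = \<bar>t\<bar>"
      have s: "s > 0" "t = s * sgn t"
        using False by (auto simp: s_def sgn_if)
      have "((1 / s) *\<^sub>R a, (1 / s) * b) \<in> M"
        using subspace_scale[OF sub ab, of "1 / s"] by simp
      then have "(1 / s) * b + sgn t * c \<le> p ((1 / s) *\<^sub>R a + sgn t *\<^sub>R y)"
        using bound False by (auto simp: sgn_if)
      then have "s * ((1 / s) * b + sgn t * c) \<le> s * p ((1 / s) *\<^sub>R a + sgn t *\<^sub>R y)"
        using s by (simp add: mult_left_mono)
      also have "\<dots> = p (s *\<^sub>R ((1 / s) *\<^sub>R a + sgn t *\<^sub>R y))"
        using pos_homogeneous s by simp
      finally show ?thesis
        using s a' b' by (simp add: algebra_simps)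
    qed
  qed
  moreover have "subspace ?M'"
    by (rule subspace_sums[OF sub subspace_span])
  ultimately show ?thesis
    unfolding dominated_def by blast
qed

lemma maximal_dominated_total:
  assumes M: "dominated M" and maximal: "\<forall>H. dominated H \<longrightarrow> M \<subseteq> H \<longrightarrow> H = M"
  shows "\<exists>b. (y, b) \<in> M"
proof -
  obtain c where "\<forall>(a, b)\<in>M. b + c \<le> p (a + y) \<and> b - c \<le> p (a - y)"
    using extension_constant_exists[OF M] by blast
  define M' where "M' = {m + w | m w. m \<in> M \<and> w \<in> span {(y, c)}}"
  have "dominated M'"
    unfolding M'_def by (rule dominated_sums_span) fact+
  moreover have "M \<subseteq> M'"
    unfolding M'_def by (metis (mono_tags, lifting) add.right_neutral mem_Collect_eq span_zero subsetI)
  moreover have "(y, c) \<in> M'"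
  proof -
    have "(0, 0) \<in> M"
      using M subspace_0 unfolding dominated_def by (metis zero_prod_def)
    then show ?thesis
      unfolding M'_def using span_base[of "(y, c)" "{(y, c)}"] by force
  qed
  ultimately have "M' = M"
    using maximal by blast
  then show ?thesis
    using \<open>(y, c) \<in> M'\<close> by blast
qed

theorem hahn_banach: "\<exists>F. linear F \<and> (\<forall>x. F x \<le> p x) \<and> F v = p v"
proof -
  obtain M where M: "dominated M" "span {(v, p v)} \<subseteq> M"
    and maximal: "\<forall>H. dominated H \<longrightarrow> M \<subseteq> H \<longrightarrow> H = M"
    using maximal_dominated_exists[OF dominated_ray] by blast
  have sub: "subspace M"
    using M(1) unfolding dominated_def by blast
  define F where "F y = (THE b. (y, b) \<in> M)" for y
  have graph: "(y, F y) \<in> M" for y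
    using maximal_dominated_total[OF M(1) maximal, of y] dominated_unique[OF M(1)]
    unfolding F_def by (metis theI)
  have graph_unique: "b = F y" if "(y, b) \<in> M" for y b
    using dominated_unique[OF M(1) that graph] .
  have "linear F"
  proof (rule linearI)
    fix x y
    show "F (x + y) = F x + F y"
      using graph_unique subspace_add[OF sub graph[of x] graph[of y]] by simp
  next
    fix c :: real and x
    show "F (c *\<^sub>R x) = c *\<^sub>R F x"
      using graph_unique subspace_scale[OF sub graph[of x], of c] by simp
  qed
  moreover have "F x \<le> p x" for x
    using M(1) graph[of x] unfolding dominated_def by auto
  moreover have "F v = p v"
  proof -
    have "(v, p v) \<in> M"
      using M(2) span_base[of "(v, p v)" "{(v, p v)}"] by blast
    then show ?thesis
      using graph_unique by simp
  qed
  ultimately show ?thesis by blast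
qed

end

section \<open>Topology of locally convex spaces and the Minkowski gauge\<close>

lemma open_translation_preimage:
  assumes "open U"
  shows "open {v :: 'a::lc_tvs. v + c \<in> U}"
proof (subst open_subopen, intro ballI)
  fix v assume "v \<in> {v. v + c \<in> U}"
  then obtain V W where "open V" "v \<in> V" "c \<in> W" "\<forall>a\<in>V. \<forall>b\<in>W. a + b \<in> U"
    using lc_continuous_add[OF assms, of v c] by auto
  then show "\<exists>T. open T \<and> v \<in> T \<and> T \<subseteq> {v. v + c \<in> U}" by blast
qed

lemma open_scaling_preimage:
  assumes "open U"
  shows "open {v :: 'a::lc_tvs. c *\<^sub>R v \<in> U}"
proof (subst open_subopen, intro ballI)
  fix v assume "v \<in> {v. c *\<^sub>R v \<in> U}"
  then obtain e V where "e > 0" "open V" "v \<in> V" "\<forall>d. \<bar>d - c\<bar> < e \<longrightarrow> (\<forall>w\<in>V. d *\<^sub>R w \<in> U)"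
    using lc_continuous_scaleR[OF assms, of c v] by auto
  then show "\<exists>T. open T \<and> v \<in> T \<and> T \<subseteq> {v. c *\<^sub>R v \<in> U}" by force
qed

lemma open_negations:
  assumes "open U"
  shows "open (uminus ` U :: 'a::lc_tvs set)"
proof -
  have "uminus ` U = {v. (- 1) *\<^sub>R v \<in> U}"
    by force
  then show ?thesis
    using open_scaling_preimage[OF assms, of "- 1"] by (simp only:)
qed

lemma nhd_absorbing:
  assumes "open U" "(0 :: 'a::lc_tvs) \<in> U"
  shows "\<exists>t>0. t *\<^sub>R x \<in> U"
proof -
  obtain e V where "e > 0" "x \<in> V" "\<forall>d. \<bar>d\<bar> < e \<longrightarrow> (\<forall>w\<in>V. d *\<^sub>R w \<in> U)"
    using lc_continuous_scaleR[of U 0 x] assms by auto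
  then show ?thesis by (intro exI[of _ "e / 2"]) auto
qed

lemma open_sums:
  assumes "open W"
  shows "open (\<Union>s\<in>S. \<Union>w\<in>W. {s + w :: 'a::lc_tvs})"
proof -
  have sums: "(\<Union>s\<in>S. \<Union>w\<in>W. {s + w}) = (\<Union>s\<in>S. {v. v + (- s) \<in> W})"
    by (auto simp: algebra_simps) (metis add.commute diff_add_cancel)
  have "open {v. v + (- s) \<in> W}" for s
    by (rule open_translation_preimage[OF assms])
  then show ?thesis
    unfolding sums by (rule open_UN[rule_format])
qed

lemma convex_open_nhd:
  assumes "open U" "(0 :: 'a::lc_tvs) \<in> U"
  shows "\<exists>V. open V \<and> 0 \<in> V \<and> V \<subseteq> U \<and> convex V"
proof -
  obtain V where V: "open V" "0 \<in> V" "V \<subseteq> U"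
    and segments: "\<forall>x\<in>V. \<forall>y\<in>V. \<forall>u::real. 0 \<le> u \<and> u \<le> 1 \<longrightarrow> (1 - u) *\<^sub>R x + u *\<^sub>R y \<in> V"
    using lc_locally_convex[OF assms] by blast
  have "convex V"
    unfolding convex_alt using segments by metis
  then show ?thesis
    using V by blast
qed

lemma linear_continuous_if_bounded_on_nhd:
  fixes F :: "'a::lc_tvs \<Rightarrow> real"
  assumes F: "linear F" and W: "open W" "0 \<in> W" and bounded: "\<forall>w\<in>W. \<bar>F w\<bar> \<le> 1"
  shows "continuous_on UNIV F"
  unfolding continuous_on_topological
proof (intro ballI allI impI)
  fix x B assume "open B" "F x \<in> B"
  then obtain e where e: "e > 0" "\<forall>y. dist y (F x) < e \<longrightarrow> y \<in> B"
    using open_dist by metis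
  define A where "A = {v. v + (- x) \<in> {u. (2 / e) *\<^sub>R u \<in> W}}"
  have "open A"
    unfolding A_def by (intro open_translation_preimage open_scaling_preimage W(1))
  moreover have "x \<in> A"
    using W(2) by (simp add: A_def)
  moreover have "F y \<in> B" if "y \<in> A" for y
  proof -
    define u where "u = F ((2 / e) *\<^sub>R (y - x))"
    have "\<bar>u\<bar> \<le> 1"
      using bounded that by (simp add: A_def u_def)
    have "F y - F x = (e / 2) * u"
      using e(1) unfolding u_def by (simp add: linear_scale[OF F] linear_diff[OF F])
    then have "\<bar>F y - F x\<bar> = (e / 2) * \<bar>u\<bar>"
      using e(1) by (simp only: abs_mult)
    also have "\<dots> \<le> (e / 2) * 1"
      using \<open>\<bar>u\<bar> \<le> 1\<close> e(1) by (intro mult_left_mono) auto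
    finally show ?thesis
      using e by (simp add: dist_real_def)
  qed
  ultimately show "\<exists>A. open A \<and> x \<in> A \<and> (\<forall>y\<in>UNIV. y \<in> A \<longrightarrow> F y \<in> B)"
    by blast
qed

definition minkowski_gauge :: "'a::real_vector set \<Rightarrow> 'a \<Rightarrow> real" where
  "minkowski_gauge D x = Inf {t. 0 < t \<and> (1 / t) *\<^sub>R x \<in> D}"

text \<open>For a convex absorbing set D the gauge is sublinear, at most 1 on D and at least 1
  off D; this is what turns the Hahn--Banach theorem into a separation theorem.\<close>
context
  fixes D :: "'a::real_vector set"
  assumes convex: "convex D" and absorbing: "\<And>x. \<exists>t>0. t *\<^sub>R x \<in> D"
begin

private abbreviation "scales x \<equiv> {t. 0 < t \<and> (1 / t) *\<^sub>R x \<in> D}"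

private lemma zero_mem: "0 \<in> D"
  using absorbing[of 0] by auto

private lemma scales_nonempty: "scales x \<noteq> {}"
proof -
  obtain t where "t > 0" "t *\<^sub>R x \<in> D"
    using absorbing by blast
  then have "1 / t \<in> scales x" by simp
  then show ?thesis by blast
qed

private lemma scales_bdd: "bdd_below (scales x)"
  by (rule bdd_belowI[of _ 0]) auto

private lemma gauge_le: "t \<in> scales x \<Longrightarrow> minkowski_gauge D x \<le> t"
  unfolding minkowski_gauge_def by (rule cInf_lower[OF _ scales_bdd])

private lemma le_gauge: "(\<And>t. t \<in> scales x \<Longrightarrow> c \<le> t) \<Longrightarrow> c \<le> minkowski_gauge D x"
  unfolding minkowski_gauge_def by (rule cInf_greatest[OF scales_nonempty])

private lemma scales_add:
  assumes "s \<in> scales x" "t \<in> scales y"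
  shows "s + t \<in> scales (x + y)"
proof -
  have st: "s > 0" "t > 0" "(1 / s) *\<^sub>R x \<in> D" "(1 / t) *\<^sub>R y \<in> D"
    using assms by auto
  have "(s / (s + t)) *\<^sub>R ((1 / s) *\<^sub>R x) + (t / (s + t)) *\<^sub>R ((1 / t) *\<^sub>R y) \<in> D"
    using st by (intro convexD[OF convex st(3,4)]) (auto simp: add_divide_distrib[symmetric])
  moreover have "(s / (s + t)) *\<^sub>R ((1 / s) *\<^sub>R x) + (t / (s + t)) *\<^sub>R ((1 / t) *\<^sub>R y)
      = (1 / (s + t)) *\<^sub>R (x + y)"
    using st by (simp add: scaleR_add_right)
  ultimately show ?thesis
    using st by simp
qed

private lemma scales_scale: "c > 0 \<Longrightarrow> t \<in> scales x \<Longrightarrow> c * t \<in> scales (c *\<^sub>R x)"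
  by auto

lemma minkowski_gauge_sublinear: "sublinear_functional (minkowski_gauge D)"
proof
  fix x y
  have "minkowski_gauge D (x + y) - t \<le> minkowski_gauge D x" if t: "t \<in> scales y" for t
    using gauge_le[OF scales_add[OF _ t]] by (intro le_gauge) (simp add: algebra_simps)
  then have "minkowski_gauge D (x + y) - minkowski_gauge D x \<le> minkowski_gauge D y"
    by (intro le_gauge) (simp add: algebra_simps)
  then show "minkowski_gauge D (x + y) \<le> minkowski_gauge D x + minkowski_gauge D y"
    by simp
next
  text \<open>Homogeneity: one inequality for every positive factor, then apply it to 1 / c.\<close>
  have le: "minkowski_gauge D (c *\<^sub>R x) \<le> c * minkowski_gauge D x" if c: "c > 0" for c x
  proof -
    have "minkowski_gauge D (c *\<^sub>R x) / c \<le> t" if t: "t \<in> scales x" for t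
      using gauge_le[OF scales_scale[OF c t]] c by (simp add: divide_le_eq mult.commute)
    then have "minkowski_gauge D (c *\<^sub>R x) / c \<le> minkowski_gauge D x"
      by (rule le_gauge)
    then show ?thesis
      using c by (simp add: divide_le_eq mult.commute)
  qed
  fix c :: real and x assume c: "c > 0"
  have "minkowski_gauge D x \<le> (1 / c) * minkowski_gauge D (c *\<^sub>R x)"
    using le[of "1 / c" "c *\<^sub>R x"] c by simp
  then have "c * minkowski_gauge D x \<le> minkowski_gauge D (c *\<^sub>R x)"
    using c by (simp add: field_simps)
  then show "minkowski_gauge D (c *\<^sub>R x) = c * minkowski_gauge D x"
    using le[OF c, of x] by linarith
qed

lemma minkowski_gauge_le_one: "x \<in> D \<Longrightarrow> minkowski_gauge D x \<le> 1"
  by (rule gauge_le) simp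

lemma minkowski_gauge_ge_one: "x \<notin> D \<Longrightarrow> 1 \<le> minkowski_gauge D x"
proof (rule le_gauge, rule ccontr)
  fix t assume x: "x \<notin> D" and t: "t \<in> scales x" and "\<not> 1 \<le> t"
  then have "t *\<^sub>R ((1 / t) *\<^sub>R x) + (1 - t) *\<^sub>R 0 \<in> D"
    by (intro convexD[OF convex _ zero_mem]) auto
  then show False
    using x t by simp
qed

end

section \<open>Separation of a point from a closed convex set\<close>

text \<open>An open convex set containing 0 is separated from any point outside it by a continuous
  linear functional: take the Hahn--Banach extension dominated by the Minkowski gauge; it is
  bounded by 1 on the symmetric neighbourhood D \<inter> - D of 0, hence continuous.\<close>
lemma open_convex_separation_from_zero:
  fixes D :: "'a::lc_tvs set"
  assumes "open D" "convex D" "0 \<in> D" "q \<notin> D"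
  shows "\<exists>F \<in> topdual. (\<forall>x\<in>D. F x \<le> 1) \<and> 1 \<le> F q"
proof -
  have absorbing: "\<exists>t>0. t *\<^sub>R x \<in> D" for x
    using nhd_absorbing[OF assms(1,3)] .
  interpret sublinear_functional "minkowski_gauge D"
    by (rule minkowski_gauge_sublinear[OF assms(2) absorbing])
  obtain F where F: "linear F" and F_le: "\<And>x. F x \<le> minkowski_gauge D x"
    and F_q: "F q = minkowski_gauge D q"
    using hahn_banach[of q] by blast
  have F_D: "F x \<le> 1" if "x \<in> D" for x
    using F_le[of x] minkowski_gauge_le_one[OF assms(2) absorbing that] by linarith
  have "\<bar>F w\<bar> \<le> 1" if "w \<in> D" "- w \<in> D" for w
    using F_D[OF that(1)] F_D[OF that(2)] linear_neg[OF F] by simp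
  then have "\<forall>w\<in>D \<inter> uminus ` D. \<bar>F w\<bar> \<le> 1"
    by force
  moreover have "open (D \<inter> uminus ` D)" "0 \<in> D \<inter> uminus ` D"
    using assms(1,3) open_negations by auto
  ultimately have "F \<in> topdual"
    unfolding topdual_def using F linear_continuous_if_bounded_on_nhd by blast
  moreover have "1 \<le> F q"
    using F_q minkowski_gauge_ge_one[OF assms(2) absorbing assms(4)] by linarith
  ultimately show ?thesis
    using F_D by blast
qed

lemma convex_nhd_avoiding_closed:
  fixes G :: "'a::lc_tvs set"
  assumes "closed G" "p \<notin> G"
  shows "\<exists>W. open W \<and> 0 \<in> W \<and> convex W \<and> (\<forall>w\<in>W. p - w \<notin> G)"
proof -
  define U where "U = uminus ` {u. u + p \<in> - G}"
  have "open U"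
    unfolding U_def using assms(1) by (intro open_negations open_translation_preimage) auto
  moreover have "0 \<in> U"
    unfolding U_def using assms(2) by force
  ultimately obtain W where W: "open W" "0 \<in> W" "convex W" "W \<subseteq> U"
    using convex_open_nhd by blast
  have "p - w \<notin> G" if w: "w \<in> W" for w
  proof -
    obtain u where "w = - u" "u + p \<notin> G"
      using w W(4) unfolding U_def by blast
    then show ?thesis by (simp add: algebra_simps)
  qed
  then show ?thesis
    using W by blast
qed

text \<open>The general case: thicken G - g0 by a convex open neighbourhood W of 0 that keeps it
  away from p - g0, and use the absorbing property of W to obtain a strict gap.\<close>
theorem separation:
  fixes G :: "'a::lc_tvs set"
  assumes closed: "closed G" and convex: "convex G" and "G \<noteq> {}" and p: "p \<notin> G"
  shows "\<exists>F \<alpha>. F \<in> topdual \<and> (\<forall>g\<in>G. F g \<le> \<alpha>) \<and> \<alpha> < F p"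
proof -
  obtain W where W: "open W" "0 \<in> W" "convex W" and W_avoids: "\<And>w. w \<in> W \<Longrightarrow> p - w \<notin> G"
    using convex_nhd_avoiding_closed[OF closed p] by blast
  obtain g0 where g0: "g0 \<in> G"
    using \<open>G \<noteq> {}\<close> by blast
  define D where "D = (\<Union>s\<in>(+) (- g0) ` G. \<Union>w\<in>W. {s + w})"
  have D_mem: "g - g0 + w \<in> D" if "g \<in> G" "w \<in> W" for g w
    unfolding D_def using that by force
  have "open D"
    unfolding D_def by (rule open_sums[OF W(1)])
  moreover have "convex D"
    unfolding D_def by (intro convex_sums convex_translation convex W(3))
  moreover have "0 \<in> D"
    using D_mem[OF g0 W(2)] by simp
  moreover have "p - g0 \<notin> D"
  proof
    assume "p - g0 \<in> D"
    then obtain g w where "g \<in> G" "w \<in> W" "p - g0 = - g0 + g + w"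
      unfolding D_def by blast
    then have "p - w = g"
      by (simp add: algebra_simps)
    then show False
      using W_avoids[OF \<open>w \<in> W\<close>] \<open>g \<in> G\<close> by simp
  qed
  ultimately have "\<exists>F \<in> topdual. (\<forall>x\<in>D. F x \<le> 1) \<and> 1 \<le> F (p - g0)"
    by (rule open_convex_separation_from_zero)
  then obtain F where F: "F \<in> topdual" and F_D: "\<And>x. x \<in> D \<Longrightarrow> F x \<le> 1"
    and F_q: "1 \<le> F (p - g0)"
    by blast
  have lin: "linear F"
    using F unfolding topdual_def by simp
  obtain t where t: "t > 0" "t *\<^sub>R (p - g0) \<in> W"
    using nhd_absorbing[OF W(1,2)] by blast
  have F_G: "F g \<le> F p - t" if "g \<in> G" for g
  proof -
    have "F (g - g0 + t *\<^sub>R (p - g0)) \<le> 1"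
      using F_D[OF D_mem[OF that t(2)]] .
    then have "F g - F g0 + t * F (p - g0) \<le> F (p - g0)"
      using F_q by (simp add: linear_add[OF lin] linear_diff[OF lin] linear_scale[OF lin])
    moreover have "t \<le> t * F (p - g0)"
      using t(1) F_q by simp
    ultimately show ?thesis
      by (simp add: linear_diff[OF lin])
  qed
  show ?thesis
  proof (intro exI conjI ballI)
    show "F \<in> topdual" by fact
    show "F g \<le> F p - t" if "g \<in> G" for g
      using F_G[OF that] .
    show "F p - t < F p"
      using t(1) by simp
  qed
qed

section \<open>The product space and its dual\<close>

instance prod :: (lc_tvs, lc_tvs) lc_tvs
proof
  fix U :: "('a \<times> 'b) set" and a b
  assume "open U" "a + b \<in> U"
  then obtain A B where AB: "open A" "open B" "a + b \<in> A \<times> B" "A \<times> B \<subseteq> U"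
    using open_prod_elim by metis
  obtain V1 W1 where fst_part: "open V1" "open W1" "fst a \<in> V1" "fst b \<in> W1" "\<forall>v\<in>V1. \<forall>w\<in>W1. v + w \<in> A"
    using lc_continuous_add[OF AB(1)] AB(3) by (metis fst_add mem_Times_iff)
  obtain V2 W2 where snd_part: "open V2" "open W2" "snd a \<in> V2" "snd b \<in> W2" "\<forall>v\<in>V2. \<forall>w\<in>W2. v + w \<in> B"
    using lc_continuous_add[OF AB(2)] AB(3) by (metis snd_add mem_Times_iff)
  show "\<exists>V W. open V \<and> open W \<and> a \<in> V \<and> b \<in> W \<and> (\<forall>v\<in>V. \<forall>w\<in>W. v + w \<in> U)"
  proof (intro exI conjI)
    show "open (V1 \<times> V2)" "open (W1 \<times> W2)"
      using fst_part snd_part by (auto intro: open_Times)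
    show "a \<in> V1 \<times> V2" "b \<in> W1 \<times> W2"
      using fst_part snd_part by (auto simp: mem_Times_iff)
    show "\<forall>v\<in>V1 \<times> V2. \<forall>w\<in>W1 \<times> W2. v + w \<in> U"
      using fst_part(5) snd_part(5) AB(4) by (auto simp: mem_Times_iff)
  qed
next
  fix U :: "('a \<times> 'b) set" and c a
  assume "open U" "c *\<^sub>R a \<in> U"
  then obtain A B where AB: "open A" "open B" "c *\<^sub>R a \<in> A \<times> B" "A \<times> B \<subseteq> U"
    using open_prod_elim by metis
  obtain e1 V1 where fst_part: "e1 > 0" "open V1" "fst a \<in> V1" "\<forall>d. \<bar>d - c\<bar> < e1 \<longrightarrow> (\<forall>v\<in>V1. d *\<^sub>R v \<in> A)"
    using lc_continuous_scaleR[OF AB(1)] AB(3) by (metis fst_scaleR mem_Times_iff)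
  obtain e2 V2 where snd_part: "e2 > 0" "open V2" "snd a \<in> V2" "\<forall>d. \<bar>d - c\<bar> < e2 \<longrightarrow> (\<forall>v\<in>V2. d *\<^sub>R v \<in> B)"
    using lc_continuous_scaleR[OF AB(2)] AB(3) by (metis snd_scaleR mem_Times_iff)
  show "\<exists>e>0. \<exists>V. open V \<and> a \<in> V \<and> (\<forall>d. \<bar>d - c\<bar> < e \<longrightarrow> (\<forall>v\<in>V. d *\<^sub>R v \<in> U))"
  proof (intro exI conjI allI impI ballI)
    show "min e1 e2 > 0" "open (V1 \<times> V2)" "a \<in> V1 \<times> V2"
      using fst_part snd_part by (auto intro: open_Times simp: mem_Times_iff)
    fix d v assume "\<bar>d - c\<bar> < min e1 e2" "v \<in> V1 \<times> V2"
    then show "d *\<^sub>R v \<in> U"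
      using fst_part(4) snd_part(4) AB(4) by (auto simp: mem_Times_iff)
  qed
next
  fix U :: "('a \<times> 'b) set"
  assume "open U" "0 \<in> U"
  then obtain A B where AB: "open A" "open B" "0 \<in> A \<times> B" "A \<times> B \<subseteq> U"
    using open_prod_elim by metis
  obtain V1 where fst_part: "open V1" "0 \<in> V1" "V1 \<subseteq> A" "convex V1"
    using convex_open_nhd[OF AB(1)] AB(3) by (auto simp: zero_prod_def)
  obtain V2 where snd_part: "open V2" "0 \<in> V2" "V2 \<subseteq> B" "convex V2"
    using convex_open_nhd[OF AB(2)] AB(3) by (auto simp: zero_prod_def)
  have "convex (V1 \<times> V2)"
    using fst_part(4) snd_part(4) by (rule convex_Times)
  then show "\<exists>V. open V \<and> 0 \<in> V \<and> V \<subseteq> U \<and>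
      (\<forall>x\<in>V. \<forall>y\<in>V. \<forall>u::real. 0 \<le> u \<and> u \<le> 1 \<longrightarrow> (1 - u) *\<^sub>R x + u *\<^sub>R y \<in> V)"
    using fst_part(1-3) snd_part(1-3) AB(4) unfolding convex_alt
    by (intro exI[of _ "V1 \<times> V2"]) (auto intro: open_Times simp: zero_prod_def add.commute)
qed

lemma topdual_prod_components:
  fixes F :: "'a::lc_tvs \<times> 'b::lc_tvs \<Rightarrow> real"
  assumes "F \<in> topdual"
  shows "(\<lambda>x. F (x, 0)) \<in> topdual" and "(\<lambda>z. F (0, z)) \<in> topdual"
    and "F (x, z) = F (x, 0) + F (0, z)"
proof -
  have F: "linear F" "continuous_on UNIV F"
    using assms unfolding topdual_def by auto
  have "linear (\<lambda>x :: 'a. (x, 0 :: 'b))" "linear (\<lambda>z :: 'b. (0 :: 'a, z))"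
    by (auto intro!: linearI)
  then have "linear (\<lambda>x. F (x, 0))" "linear (\<lambda>z. F (0, z))"
    using linear_compose[OF _ F(1)] unfolding o_def by blast+
  moreover have "continuous_on UNIV (\<lambda>x. F (x, 0))" "continuous_on UNIV (\<lambda>z. F (0, z))"
    by (intro continuous_on_compose2[OF F(2)] continuous_on_Pair continuous_on_id
        continuous_on_const subset_UNIV)+
  ultimately show "(\<lambda>x. F (x, 0)) \<in> topdual" "(\<lambda>z. F (0, z)) \<in> topdual"
    unfolding topdual_def by simp_all
  show "F (x, z) = F (x, 0) + F (0, z)"
    using linear_add[OF F(1), of "(x, 0)" "(0, z)"] by simp
qed

lemma zero_mem_topdual: "(\<lambda>x. 0) \<in> topdual"
  unfolding topdual_def by (auto intro!: linearI)

section \<open>Conjugates and biconjugates\<close>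

lemma Qtri_add:
  assumes "A \<in> Qtri C" "a \<in> A" "c \<in> C"
  shows "a + c \<in> A"
proof -
  have "a + c \<in> convex hull {a + c | a c. a \<in> A \<and> c \<in> C}"
    using assms(2,3) by (intro hull_inc) blast
  then show ?thesis
    using assms(1) closure_subset unfolding Qtri_def by blast
qed

lemma nonpos_on_recession_cone:
  fixes f :: "'z::real_vector \<Rightarrow> real"
  assumes f: "linear f" and "cone C" and "a \<in> A"
    and stable: "\<And>a c. a \<in> A \<Longrightarrow> c \<in> C \<Longrightarrow> a + c \<in> A"
    and bounded: "\<And>a. a \<in> A \<Longrightarrow> f a \<le> \<alpha>" and "c \<in> C"
  shows "f c \<le> 0"
proof (rule ccontr)
  assume "\<not> f c \<le> 0"
  define t where "t = (\<alpha> - f a) / f c + 1"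
  have "t \<ge> 0"
    using bounded[OF \<open>a \<in> A\<close>] \<open>\<not> f c \<le> 0\<close> unfolding t_def
    by simp
  then have "a + t *\<^sub>R c \<in> A"
    using stable[OF \<open>a \<in> A\<close>] \<open>cone C\<close> \<open>c \<in> C\<close> unfolding cone_def by blast
  moreover have "f (a + t *\<^sub>R c) = \<alpha> + f c"
    using \<open>\<not> f c \<le> 0\<close> by (simp add: linear_add[OF f] linear_scale[OF f] t_def field_simps)
  ultimately show False
    using bounded[of "a + t *\<^sub>R c"] \<open>\<not> f c \<le> 0\<close> by simp
qed

lemma minorant_in_negdual:
  assumes "cone C" and Qtri: "\<forall>x. g x \<in> Qtri C" and "z1 \<in> g x1" and zs: "zs \<in> topdual"
    and minorant: "\<And>x z. z \<in> g x \<Longrightarrow> xs x + zs z \<le> \<alpha>"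
  shows "zs \<in> negdual C"
proof -
  have "zs c \<le> 0" if "c \<in> C" for c
  proof (rule nonpos_on_recession_cone[OF _ \<open>cone C\<close> \<open>z1 \<in> g x1\<close> _ _ that])
    show "linear zs" using zs unfolding topdual_def by simp
    show "a + c \<in> g x1" if "a \<in> g x1" "c \<in> C" for a c
      using Qtri_add[OF Qtri[rule_format] that] .
    show "zs a \<le> \<alpha> - xs x1" if "a \<in> g x1" for a
      using minorant[OF that] by simp
  qed
  then show ?thesis
    using zs unfolding negdual_def by simp
qed

lemma Scon_Lin: "Scon (Lin f) r zs x = {z. f x + zs z \<le> r}"
  unfolding Scon_def by auto

lemma zero_mem_conj_Lin: "0 \<in> conj g (Lin f) r zs \<longleftrightarrow> (\<forall>x. \<forall>z\<in>g x. f x + zs z \<le> r)"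
  unfolding conj_def minus_tri_def Scon_Lin by auto

lemma biconj_memD:
  assumes "z \<in> biconj C g x" "xi \<in> Xtri" "zs \<in> negdual C" "b \<in> conj g xi r zs"
  shows "b + z \<in> Scon xi r zs x"
  using assms unfolding biconj_def minus_tri_def by blast

lemma biconj_below_minorant:
  assumes "z \<in> biconj C g x" "xs \<in> topdual" "zs \<in> negdual C"
    and minorant: "\<And>x z. z \<in> g x \<Longrightarrow> xs x + zs z \<le> \<alpha>"
  shows "xs x + zs z \<le> \<alpha>"
proof -
  have "Lin xs \<in> Xtri"
    using assms(2) unfolding Xtri_def by blast
  moreover have "0 \<in> conj g (Lin xs) \<alpha> zs"
    unfolding zero_mem_conj_Lin using minorant by blast
  ultimately have "0 + z \<in> Scon (Lin xs) \<alpha> zs x"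
    using biconj_memD[OF assms(1) _ assms(3)] by blast
  then show ?thesis
    by (simp add: Scon_Lin)
qed

text \<open>If g has empty graph, the constant minorant Hat 0 at level -1 excludes every point.\<close>
lemma biconj_empty_graph:
  fixes g :: "'x::lc_tvs \<Rightarrow> 'z::lc_tvs set"
  assumes "graph g = {}"
  shows "biconj C g x = {}"
proof -
  have "Hat (\<lambda>x. 0) \<in> Xtri" "(\<lambda>z. 0) \<in> negdual C"
    unfolding Xtri_def negdual_def using zero_mem_topdual by auto
  moreover have "0 \<in> conj g (Hat (\<lambda>x. 0)) (- 1) (\<lambda>z. 0)"
    using assms unfolding graph_def conj_def minus_tri_def by auto
  moreover have "0 + z \<notin> Scon (Hat (\<lambda>x. 0)) (- 1) (\<lambda>z. 0) x" for z :: 'z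
    unfolding Scon_def by simp
  ultimately show ?thesis
    using biconj_memD by blast
qed

lemma subset_biconj: "g x \<subseteq> biconj C g x"
  unfolding biconj_def conj_def minus_tri_def by clarsimp (metis add.commute)

text \<open>The essential inclusion: a point outside g x is cut off by a separating functional,
  whose two components form an affine minorant violated at that point.\<close>
theorem biconj_subset:
  fixes C :: "'z::lc_tvs set" and g :: "'x::lc_tvs \<Rightarrow> 'z set"
  assumes "cone C" and Qtri: "\<forall>x. g x \<in> Qtri C"
    and "convex (graph g)" and "closed (graph g)"
  shows "biconj C g x \<subseteq> g x"
proof
  fix z assume z: "z \<in> biconj C g x"
  show "z \<in> g x"
  proof (rule ccontr)
    assume "z \<notin> g x"
    have "graph g \<noteq> {}"
      using z biconj_empty_graph[of g C x] by blast
    moreover have "(x, z) \<notin> graph g"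
      using \<open>z \<notin> g x\<close> unfolding graph_def by simp
    ultimately have "\<exists>F \<alpha>. F \<in> topdual \<and> (\<forall>q\<in>graph g. F q \<le> \<alpha>) \<and> \<alpha> < F (x, z)"
      by (rule separation[OF \<open>closed (graph g)\<close> \<open>convex (graph g)\<close>])
    then obtain F \<alpha> where F: "F \<in> topdual" and below: "\<forall>q\<in>graph g. F q \<le> \<alpha>"
      and "\<alpha> < F (x, z)"
      by blast
    define xs where "xs = (\<lambda>x. F (x, 0))"
    define zs where "zs = (\<lambda>z. F (0, z))"
    have xs: "xs \<in> topdual" and zs: "zs \<in> topdual"
      unfolding xs_def zs_def using topdual_prod_components(1,2)[OF F] .
    have split: "F (x', z') = xs x' + zs z'" for x' z'
      unfolding xs_def zs_def by (rule topdual_prod_components(3)[OF F])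
    have minorant: "xs x' + zs z' \<le> \<alpha>" if "z' \<in> g x'" for x' z'
    proof -
      have "(x', z') \<in> graph g"
        using that unfolding graph_def by simp
      then show ?thesis
        using below split by metis
    qed
    obtain x1 z1 where "z1 \<in> g x1"
      using \<open>graph g \<noteq> {}\<close> unfolding graph_def by auto
    have "zs \<in> negdual C"
      using minorant_in_negdual[OF \<open>cone C\<close> Qtri \<open>z1 \<in> g x1\<close> zs minorant] .
    have "xs x + zs z \<le> \<alpha>"
      using z xs \<open>zs \<in> negdual C\<close> minorant by (rule biconj_below_minorant)
    then show False
      using \<open>\<alpha> < F (x, z)\<close> split by simp
  qed
qed

theorem mainTheorem20:
  fixes C :: "'z::lc_tvs set" and g :: "'x::lc_tvs \<Rightarrow> 'z set"
  assumes "convex C" and "cone C" and "0 \<in> C"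
    and "negdual C \<noteq> {\<lambda>z. 0}"
    and "\<forall>x. g x \<in> Qtri C"
    and "convex (graph g)" and "closed (graph g)"
  shows "biconj C g = g"
proof
  fix x
  show "biconj C g x = g x"
    using biconj_subset[OF assms(2,5,6,7)] subset_biconj by blast
qed

end
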